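(* Assume $n\ge 2d$, let $\widetilde X$ be a knockoff matrix with $X^\top\widetilde X=X^\top X-D$, set $\Delta=2D^{-1}$, and couple the two formulations via $\omega=D^{-1}(X-\widetilde X)^\top y-\widehat\beta$ (so that $\widetilde\beta=\widehat\beta+\omega=D^{-1}(X-\widetilde X)^\top y$ and $\xi=\Sigma^{-1}\widehat\beta-\Delta^{-1}\widetilde\beta=\tfrac12(X+\widetilde X)^\top y$). Then: (a) For any implementation of the whitening method with this $\Delta$ and this $\omega$, there exist $W$-statistics satisfying the unordered pair property such that the standard knockoff+ procedure with these $W$-statistics and the whitening method give identical rejection sets. (b) For any $W$-statistics satisfying the unordered pair property such that $|W_1|,\dots,|W_d|$ are almost surely positive and pairwise distinct, there exists an implementation of the whitening method with this $\Delta$ and this $\omega$ such that the two methods give identical rejection sets.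
   Context: Linear model: $X\in\mathbb R^{n\times d}$ of full column rank, $y=X\beta+\varepsilon$, $\varepsilon\sim\mathcal N_n(0,\sigma^2I_n)$; $\Sigma=(X^\top X)^{-1}$, $\widehat\beta=\Sigma X^\top y$. A knockoff matrix is $\widetilde X\in\mathbb R^{n\times d}$ with $\widetilde X^\top\widetilde X=X^\top X$ and $\widetilde X^\top X=X^\top X-D$, $D$ diagonal with positive diagonal entries and $D\preceq 2X^\top X$. $W$-statistics are functions $W=(W_1,\dots,W_d)$ of $([X\ \widetilde X],y)$; set $W_j^*=\operatorname{sgn}((X_j-\widetilde X_j)^\top y)W_j$. $W$ has the unordered pair property if (for fixed $X,\widetilde X$) $W^*$ depends on $y$ only through the unordered pairs $\{X_j^\top y,\widetilde X_j^\top y\}$, $j=1,\dots,d$. Standard knockoff+ procedure at level $\alpha\in(0,1)$: let $\hat t$ be the smallest $t\in\{|W_j|:|W_j|>0\}$ with $\frac{1+\#\{j:W_j\le -t\}}{\#\{j:W_j\ge t\}}\le\alpha$ ($\hat t=+\infty$ if none) and reject $H_j:\beta_j=0$ for all $j$ with $W_j\ge\hat t$. Whitening method at level $\alpha$ for a diagonal $\Delta\succeq\Sigma$ and noise $\omega\sim\mathcal N_d(0,\sigma^2(\Delta-\Sigma))$ independent of $\widehat\beta$: set $\widetilde\beta=\widehat\beta+\omega$, $\xi=\Sigma^{-1}\widehat\beta-\Delta^{-1}\widetilde\beta$. An implementation is a rule that, as a function of $(\xi,|\widetilde\beta|)$, outputs an ordering $[1],\dots,[d]$ of $\{1,\dots,d\}$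 and signs $\psi_1,\dots,\psi_d\in\{-1,+1\}$. Put $\widetilde p_j=1/2$ if $\operatorname{sgn}(\widetilde\beta_j)=\psi_j$ and $\widetilde p_j=1$ otherwise; $\widehat{\mathrm{FDP}}_k=\frac{1+\#\{j\le k:\widetilde p_{[j]}=1\}}{\#\{j\le k:\widetilde p_{[j]}=1/2\}}$ (equal to $+\infty$ if the denominator is $0$); $\hat k=\max\{k\le d:\widehat{\mathrm{FDP}}_k\le\alpha\}$ ($\hat k=0$ if none); reject $H_{[j]}$ for all $j\le\hat k$ with $\widetilde p_{[j]}=1/2$. *)

theory Defs
  imports "HOL-Analysis.Analysis" "HOL-Probability.Probability"
begin

definition diag_pos :: "real^'d^'d \<Rightarrow> bool" where
  "diag_pos D \<longleftrightarrow> (\<forall>i j. i \<noteq> j \<longrightarrow> D$i$j = 0) \<and> (\<forall>i. D$i$i > 0)"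

definition psd_le :: "real^'d^'d \<Rightarrow> real^'d^'d \<Rightarrow> bool" where
  "psd_le A B \<longleftrightarrow> (\<forall>v. v \<bullet> ((B - A) *v v) \<ge> 0)"

definition is_knockoff :: "real^'d^'n \<Rightarrow> real^'d^'n \<Rightarrow> real^'d^'d \<Rightarrow> bool" where
  "is_knockoff X Xk D \<longleftrightarrow>
     transpose Xk ** Xk = transpose X ** X \<and>
     transpose Xk ** X = transpose X ** X - D \<and>
     diag_pos D \<and> psd_le D (2 *\<^sub>R (transpose X ** X))"

definition Sigma_of :: "real^'d^'n \<Rightarrow> real^'d^'d" where
  "Sigma_of X = matrix_inv (transpose X ** X)"

definition betahat :: "real^'d^'n \<Rightarrow> real^'n \<Rightarrow> real^'d" where
  "betahat X y = Sigma_of X *v (transpose X *v y)"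

definition wh_betatilde :: "real^'d^'n \<Rightarrow> (real^'n \<Rightarrow> real^'d) \<Rightarrow> real^'n \<Rightarrow> real^'d" where
  "wh_betatilde X omega y = betahat X y + omega y"

definition wh_xi :: "real^'d^'n \<Rightarrow> real^'d^'d \<Rightarrow> (real^'n \<Rightarrow> real^'d) \<Rightarrow> real^'n \<Rightarrow> real^'d" where
  "wh_xi X Delta omega y =
     matrix_inv (Sigma_of X) *v betahat X y - matrix_inv Delta *v wh_betatilde X omega y"

definition Delta_of :: "real^'d^'d \<Rightarrow> real^'d^'d" where
  "Delta_of D = 2 *\<^sub>R matrix_inv D"

definition omega_of :: "real^'d^'n \<Rightarrow> real^'d^'n \<Rightarrow> real^'d^'d \<Rightarrow> real^'n \<Rightarrow> real^'d" where
  "omega_of X Xk D y = matrix_inv D *v (transpose (X - Xk) *v y) - betahat X y"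

definition wh_ptilde :: "('d \<Rightarrow> real) \<Rightarrow> real^'d \<Rightarrow> 'd \<Rightarrow> real" where
  "wh_ptilde psi bt j = (if sgn (bt $ j) = psi j then 1/2 else 1)"

definition wh_FDP :: "(nat \<Rightarrow> 'd) \<Rightarrow> ('d \<Rightarrow> real) \<Rightarrow> real^'d \<Rightarrow> nat \<Rightarrow> ereal" where
  "wh_FDP ord psi bt k =
     (let num = card {i \<in> {1..k}. wh_ptilde psi bt (ord i) = 1};
          den = card {i \<in> {1..k}. wh_ptilde psi bt (ord i) = 1/2}
      in if den = 0 then \<infinity> else ereal ((1 + real num) / real den))"

definition wh_khat :: "real \<Rightarrow> (nat \<Rightarrow> 'd::finite) \<Rightarrow> ('d \<Rightarrow> real) \<Rightarrow> real^'d \<Rightarrow> nat" where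
  "wh_khat alpha ord psi bt =
     Max (insert 0 {k. k \<le> CARD('d) \<and> wh_FDP ord psi bt k \<le> ereal alpha})"

definition wh_rej :: "real \<Rightarrow> (nat \<Rightarrow> 'd::finite) \<Rightarrow> ('d \<Rightarrow> real) \<Rightarrow> real^'d \<Rightarrow> 'd set" where
  "wh_rej alpha ord psi bt =
     {ord i | i. i \<in> {1..wh_khat alpha ord psi bt} \<and> wh_ptilde psi bt (ord i) = 1/2}"

text \<open>An implementation: ordering and signs as functions of (xi, |beta tilde|).\<close>

definition valid_impl ::
  "(real^'d \<Rightarrow> real^'d \<Rightarrow> (nat \<Rightarrow> 'd::finite)) \<Rightarrow> (real^'d \<Rightarrow> real^'d \<Rightarrow> ('d \<Rightarrow> real)) \<Rightarrow> bool" where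
  "valid_impl ord psi \<longleftrightarrow>
     (\<forall>a b. bij_betw (ord a b) {1..CARD('d)} UNIV \<and> (\<forall>j. psi a b j \<in> {-1, 1}))"

definition vabs :: "real^'d \<Rightarrow> real^'d" where
  "vabs v = (\<chi> j. \<bar>v $ j\<bar>)"

definition whitening_rej ::
  "real \<Rightarrow> real^'d^'n \<Rightarrow> real^'d^'d \<Rightarrow> (real^'n \<Rightarrow> real^'d)
   \<Rightarrow> (real^'d \<Rightarrow> real^'d \<Rightarrow> (nat \<Rightarrow> 'd::finite)) \<Rightarrow> (real^'d \<Rightarrow> real^'d \<Rightarrow> ('d \<Rightarrow> real))
   \<Rightarrow> real^'n \<Rightarrow> 'd set" where
  "whitening_rej alpha X Delta omega ord psi y =
     (let bt = wh_betatilde X omega y; xi = wh_xi X Delta omega y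
      in wh_rej alpha (ord xi (vabs bt)) (psi xi (vabs bt)) bt)"

definition kf_ok :: "real \<Rightarrow> real^'d \<Rightarrow> real \<Rightarrow> bool" where
  "kf_ok alpha W t \<longleftrightarrow>
     (let den = card {j. W $ j \<ge> t}
      in (if den = 0 then \<infinity> else ereal ((1 + real (card {j. W $ j \<le> - t})) / real den))
           \<le> ereal alpha)"

definition kf_rej :: "real \<Rightarrow> real^'d \<Rightarrow> 'd set" where
  "kf_rej alpha W =
     (let T = {\<bar>W $ j\<bar> | j. \<bar>W $ j\<bar> > 0}
      in if (\<exists>t\<in>T. kf_ok alpha W t)
         then {j. W $ j \<ge> Min {t \<in> T. kf_ok alpha W t}}
         else {})"

definition Wstar :: "real^'d^'n \<Rightarrow> real^'d^'n \<Rightarrow> (real^'n \<Rightarrow> real^'d) \<Rightarrow> real^'n \<Rightarrow> real^'d" where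
  "Wstar X Xk W y = (\<chi> j. sgn ((column j X - column j Xk) \<bullet> y) * W y $ j)"

definition unordered_pair_prop :: "real^'d^'n \<Rightarrow> real^'d^'n \<Rightarrow> (real^'n \<Rightarrow> real^'d) \<Rightarrow> bool" where
  "unordered_pair_prop X Xk W \<longleftrightarrow>
     (\<forall>y y'. (\<forall>j. {column j X \<bullet> y, column j Xk \<bullet> y} = {column j X \<bullet> y', column j Xk \<bullet> y'})
        \<longrightarrow> Wstar X Xk W y = Wstar X Xk W y')"

text \<open>Law of y = X beta + eps, eps ~ N(0, sig^2 I_n).\<close>

definition gauss_law :: "real^'d^'n \<Rightarrow> real^'d \<Rightarrow> real \<Rightarrow> (real^'n) measure" where
  "gauss_law X beta sig =
     density lborel (\<lambda>y. ennreal ((2 * pi * power sig 2) powr (- real CARD('n) / 2)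
        * exp (- power (norm (y - X *v beta)) 2 / (2 * power sig 2))))"

end

theory Submission
  imports Defs
begin

(* Under the coupling, betatilde_j = (X_j - Xk_j)'y / D_jj and xi_j = (X_j + Xk_j)'y / 2.  Hence
   the unordered pair {X_j'y, Xk_j'y} carries exactly the information (xi_j, |betatilde_j|), and
   sgn betatilde_j = sgn (X_j - Xk_j)'y: W-statistics with the unordered pair property are exactly
   those whose W* is a function of (xi, |betatilde|), the data an implementation may use, and
   W_j = sgn betatilde_j * W*_j.  Once the hypotheses are listed by decreasing |W_j|, the knockoff+
   ratio at the threshold |W_[k]| is the whitening estimate FDP_k, with W_j > 0 playing the role
   of ptilde_j = 1/2.  For (a) take |W_j| = d + 1 - (position of j) with the sign read off from
   ptilde_j; for (b) order by |W*| and take psi = sgn W*.  Zero signs only occur on the hyperplanes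
   (X_j - Xk_j)'y = 0, which are Gaussian null sets because D_jj > 0 forces X_j <> Xk_j. *)

lemma exists_strict_antimono_enumeration:
  fixes v :: "'d::finite \<Rightarrow> 'a::linorder"
  assumes "inj v"
  shows "\<exists>f. bij_betw f {1..CARD('d)} UNIV \<and> strict_antimono_on {1..CARD('d)} (v \<circ> f)"
proof -
  define rk where "rk j = Suc (card {k. v j < v k})" for j
  have rk_less: "rk j' < rk j" if "v j < v j'" for j j'
  proof -
    have "{k. v j' < v k} \<subset> {k. v j < v k}" using that by auto
    then show ?thesis unfolding rk_def by (simp add: psubset_card_mono)
  qed
  have "inj rk"
  proof (rule injI)
    fix j j' assume "rk j = rk j'"
    then have "v j = v j'"
      using rk_less[of j j'] rk_less[of j' j] by (cases "v j" "v j'" rule: linorder_cases) auto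
    then show "j = j'" using assms by (simp add: inj_eq)
  qed
  moreover have "rk ` UNIV \<subseteq> {1..CARD('d)}"
  proof -
    have "card {k. v j < v k} < CARD('d)" for j
      by (rule psubset_card_mono) auto
    then show ?thesis by (auto simp: rk_def Suc_le_eq)
  qed
  ultimately have rk: "bij_betw rk UNIV {1..CARD('d)}"
    by (simp add: bij_betw_def card_image card_subset_eq)
  define f where "f = inv_into UNIV rk"
  have rk_f: "rk (f i) = i" if "i \<in> {1..CARD('d)}" for i
    using rk that unfolding f_def bij_betw_def by (simp add: f_inv_into_f)
  have "strict_antimono_on {1..CARD('d)} (v \<circ> f)"
  proof (rule monotone_onI)
    fix i i' assume i: "i \<in> {1..CARD('d)}" "i' \<in> {1..CARD('d)}" "i < i'"
    show "(v \<circ> f) i' < (v \<circ> f) i"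
    proof (rule ccontr)
      assume "\<not> (v \<circ> f) i' < (v \<circ> f) i"
      then have "v (f i) \<le> v (f i')" by simp
      then have "rk (f i') \<le> rk (f i)"
        using rk_less[of "f i" "f i'"] unfolding le_less by (auto simp: rk_def)
      then show False using rk_f i by simp
    qed
  qed
  then show ?thesis using bij_betw_inv_into[OF rk] unfolding f_def by blast
qed

(* The sets counted by knockoff+ at the threshold |W_[k]| are the images under ord of the
   positives and negatives among the first k positions. *)
lemma kf_rej_eq_wh_rej:
  fixes W bt :: "real^'d::finite" and ord :: "nat \<Rightarrow> 'd" and psi :: "'d \<Rightarrow> real"
  assumes ord: "bij_betw ord {1..CARD('d)} UNIV"
    and sorted: "strict_antimono_on {1..CARD('d)} (\<lambda>i. \<bar>W $ ord i\<bar>)"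
    and nonzero: "\<And>j. W $ j \<noteq> 0"
    and signs: "\<And>j. 0 < W $ j \<longleftrightarrow> wh_ptilde psi bt j = 1/2"
  shows "kf_rej alpha W = wh_rej alpha ord psi bt"
proof -
  define d where "d = CARD('d)"
  define m where "m i = \<bar>W $ ord i\<bar>" for i
  have inj: "inj_on ord {1..d}" and surj: "ord ` {1..d} = UNIV"
    using ord unfolding bij_betw_def d_def by auto
  have m_le_iff: "m k \<le> m i \<longleftrightarrow> i \<le> k" if "i \<in> {1..d}" "k \<in> {1..d}" for i k
    using monotone_onD[OF sorted, of i k] monotone_onD[OF sorted, of k i] that
    unfolding m_def d_def by (cases i k rule: linorder_cases) auto
  have top: "{j. m k \<le> \<bar>W $ j\<bar>} = ord ` {1..k}" if k: "k \<in> {1..d}" for k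
  proof -
    have "{j. m k \<le> \<bar>W $ j\<bar>} = {j \<in> ord ` {1..d}. m k \<le> \<bar>W $ j\<bar>}"
      unfolding surj by simp
    also have "\<dots> = ord ` {i \<in> {1..d}. m k \<le> m i}"
      unfolding m_def by auto
    also have "{i \<in> {1..d}. m k \<le> m i} = {1..k}" using m_le_iff k by auto
    finally show ?thesis .
  qed
  have card_top: "card {j. m k \<le> \<bar>W $ j\<bar> \<and> P j} = card {i \<in> {1..k}. P (ord i)}"
    if k: "k \<in> {1..d}" for k P
  proof -
    have "{j. m k \<le> \<bar>W $ j\<bar> \<and> P j} = ord ` {i \<in> {1..k}. P (ord i)}"
      unfolding Collect_conj_eq top[OF k] by auto
    moreover have "inj_on ord {i \<in> {1..k}. P (ord i)}"
      by (rule inj_on_subset[OF inj]) (use k in auto)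
    ultimately show ?thesis by (simp add: card_image)
  qed
  have m_pos: "0 < m k" for k using nonzero by (simp add: m_def)
  have pos_iff: "m k \<le> W $ j \<longleftrightarrow> m k \<le> \<bar>W $ j\<bar> \<and> wh_ptilde psi bt j = 1/2" for k j
    using signs[of j] m_pos[of k] by auto
  have neg_iff: "W $ j \<le> - m k \<longleftrightarrow> m k \<le> \<bar>W $ j\<bar> \<and> wh_ptilde psi bt j = 1" for k j
    using signs[of j] nonzero[of j] m_pos[of k] unfolding wh_ptilde_def by auto
  have ok_iff: "kf_ok alpha W (m k) \<longleftrightarrow> wh_FDP ord psi bt k \<le> ereal alpha" if "k \<in> {1..d}" for k
    unfolding kf_ok_def wh_FDP_def Let_def pos_iff neg_iff card_top[OF that] ..
  define K where "K = {k. k \<le> d \<and> wh_FDP ord psi bt k \<le> ereal alpha}"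
  have K_sub: "K \<subseteq> {1..d}"
    unfolding K_def wh_FDP_def by (auto simp: Suc_le_eq intro!: Nat.gr0I)
  then have "finite K" by (rule finite_subset) simp
  have T: "{\<bar>W $ j\<bar> | j. \<bar>W $ j\<bar> > 0} = m ` {1..d}"
  proof -
    have "{\<bar>W $ j\<bar> | j. \<bar>W $ j\<bar> > 0} = (\<lambda>j. \<bar>W $ j\<bar>) ` ord ` {1..d}"
      using nonzero unfolding surj by auto
    then show ?thesis unfolding image_image m_def .
  qed
  have T_ok: "{t \<in> m ` {1..d}. kf_ok alpha W t} = m ` K"
    using ok_iff K_sub unfolding K_def by auto
  have khat: "wh_khat alpha ord psi bt = (if K = {} then 0 else Max K)"
    unfolding wh_khat_def K_def[symmetric] d_def[symmetric]
    using \<open>finite K\<close> by (auto simp: Max_insert)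
  show ?thesis
  proof (cases "K = {}")
    case True
    then show ?thesis
      unfolding kf_rej_def wh_rej_def Let_def T khat using T_ok by auto
  next
    case False
    have max: "Max K \<in> K" using False \<open>finite K\<close> by simp
    then have max_d: "Max K \<in> {1..d}" using K_sub by blast
    have "Min (m ` K) = m (Max K)"
      using \<open>finite K\<close> max max_d K_sub by (intro Min_eqI) (auto simp: m_le_iff)
    moreover have "\<exists>t \<in> m ` {1..d}. kf_ok alpha W t" using T_ok False by blast
    ultimately have "kf_rej alpha W = {j. m (Max K) \<le> W $ j}"
      unfolding kf_rej_def Let_def T T_ok by simp
    also have "\<dots> = {j \<in> ord ` {1..Max K}. wh_ptilde psi bt j = 1/2}"
      unfolding pos_iff top[OF max_d, symmetric] by blast
    also have "\<dots> = wh_rej alpha ord psi bt"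
      unfolding wh_rej_def khat using False by auto
    finally show ?thesis .
  qed
qed

definition whitening_statistic ::
    "(nat \<Rightarrow> 'd::finite) \<Rightarrow> ('d \<Rightarrow> real) \<Rightarrow> real^'d \<Rightarrow> real^'d" where
  "whitening_statistic ord psi bt =
     (\<chi> j. (if wh_ptilde psi bt j = 1/2 then 1 else -1)
            * (real CARD('d) + 1 - real (inv_into {1..CARD('d)} ord j)))"

lemma wh_ptilde_half_iff: "wh_ptilde psi bt j = 1/2 \<longleftrightarrow> sgn (bt $ j) = psi j"
  by (simp add: wh_ptilde_def)

lemma kf_rej_whitening_statistic:
  assumes ord: "bij_betw ord {1..CARD('d::finite)} UNIV"
  shows "kf_rej alpha (whitening_statistic ord psi bt) = wh_rej alpha ord psi (bt :: real^'d)"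
proof (rule kf_rej_eq_wh_rej[OF ord])
  define pos where "pos = inv_into {1..CARD('d)} ord"
  have pos: "pos j \<in> {1..CARD('d)}" for j
    using ord unfolding pos_def bij_betw_def by (metis UNIV_I inv_into_into)
  have pos_ord: "pos (ord i) = i" if "i \<in> {1..CARD('d)}" for i
    using ord that unfolding pos_def bij_betw_def by (simp add: inv_into_f_f)
  have abs_W: "\<bar>whitening_statistic ord psi bt $ j\<bar> = real CARD('d) + 1 - real (pos j)" for j
    using pos[of j] by (simp add: whitening_statistic_def pos_def)
  show "strict_antimono_on {1..CARD('d)} (\<lambda>i. \<bar>whitening_statistic ord psi bt $ ord i\<bar>)"
    by (rule monotone_onI) (simp add: abs_W pos_ord)
  show "whitening_statistic ord psi bt $ j \<noteq> 0" for j
    using abs_W[of j] pos[of j] by auto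
  show "0 < whitening_statistic ord psi bt $ j \<longleftrightarrow> wh_ptilde psi bt j = 1/2" for j
    using pos[of j] by (simp add: whitening_statistic_def pos_def)
qed

lemma matrix_inv_cancel:
  fixes A :: "'a::field^'n^'n"
  assumes "invertible A"
  shows "A ** matrix_inv A = mat 1" "matrix_inv A ** A = mat 1"
  using someI_ex[OF assms[unfolded invertible_def]] unfolding matrix_inv_def by auto

lemma matrix_inv_unique:
  fixes A B :: "'a::field^'n^'n"
  assumes AB: "A ** B = mat 1" and BA: "B ** A = mat 1"
  shows "matrix_inv A = B"
proof -
  have "invertible A" using AB BA unfolding invertible_def by blast
  then have "matrix_inv A = matrix_inv A ** (A ** B)" by (simp add: AB)
  also have "\<dots> = (matrix_inv A ** A) ** B" by (simp add: matrix_mul_assoc)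
  finally show ?thesis by (simp add: matrix_inv_cancel \<open>invertible A\<close>)
qed

definition diag_matrix :: "('n \<Rightarrow> 'a::zero) \<Rightarrow> 'a^'n^'n" where
  "diag_matrix c = (\<chi> i j. if i = j then c i else 0)"

lemma mat_eq_diag_matrix: "mat k = diag_matrix (\<lambda>_. k)"
  by (simp add: mat_def diag_matrix_def)

lemma diag_matrix_mult:
  fixes c e :: "'n::finite \<Rightarrow> 'a::semiring_1"
  shows "diag_matrix c ** diag_matrix e = diag_matrix (\<lambda>i. c i * e i)"
  by (simp add: diag_matrix_def matrix_matrix_mult_def vec_eq_iff
      if_distrib[of "\<lambda>x. x * _"] if_distrib[of "\<lambda>x. _ * x"] cong: if_cong)

lemma diag_matrix_mult_vector:
  fixes c :: "'n::finite \<Rightarrow> 'a::semiring_1"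
  shows "(diag_matrix c *v v) $ j = c j * v $ j"
  by (simp add: diag_matrix_def matrix_vector_mult_def if_distrib[of "\<lambda>x. x * _"] cong: if_cong)

lemma matrix_inv_diag_matrix:
  fixes c :: "'n::finite \<Rightarrow> 'a::field"
  assumes "\<And>i. c i \<noteq> 0"
  shows "matrix_inv (diag_matrix c) = diag_matrix (\<lambda>i. inverse (c i))"
  by (rule matrix_inv_unique) (simp_all add: diag_matrix_mult mat_eq_diag_matrix assms)

lemma diag_pos_eq_diag_matrix:
  assumes "diag_pos D"
  shows "D = diag_matrix (\<lambda>i. D $ i $ i)"
  using assms by (simp add: diag_pos_def diag_matrix_def vec_eq_iff)

lemma column_diff: "column j (A - B) = column j A - column j B"
  by (simp add: column_def vec_eq_iff)

lemma vector_matrix_mult_component: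
  fixes A :: "real^'d^'n"
  shows "(y v* A) $ j = column j A \<bullet> y"
  by (simp add: vector_matrix_mult_def column_def inner_vec_def mult.commute)

lemma transpose_mult_component:
  fixes A B :: "real^'d^'n"
  shows "(transpose A ** B) $ i $ j = column i A \<bullet> column j B"
  by (simp add: matrix_matrix_mult_def transpose_def column_def inner_vec_def)

lemma invertible_gram:
  fixes X :: "real^'d^'n"
  assumes "rank X = CARD('d)"
  shows "invertible (transpose X ** X)"
proof -
  have injX: "inj ((*v) X)" using assms full_rank_injective by blast
  have "v = 0" if "(transpose X ** X) *v v = 0" for v
  proof -
    have "(X *v v) \<bullet> (X *v v) = v \<bullet> ((transpose X ** X) *v v)"
      by (metis dot_lmul_matrix inner_commute matrix_vector_mul_assoc transpose_matrix_vector)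
    then have "X *v v = 0" using that by simp
    then show "v = 0" using injX by (metis injD matrix_vector_mult_0_right)
  qed
  then have "inj ((*v) (transpose X ** X))"
    by (simp add: linear_injective_0 matrix_vector_mul_linear)
  then show ?thesis using matrix_left_invertible_injective invertible_left_inverse by blast
qed

lemma sgn_mult_sign_indicator:
  fixes x p r :: real
  assumes "p \<in> {-1, 1}"
  shows "sgn x * ((if sgn x = p then 1 else -1) * r) = (if x = 0 then 0 else p * r)"
  using assms by (auto simp: sgn_if)

lemma pos_iff_sign_recovered:
  fixes s w :: real
  assumes "s \<in> {-1, 1}" and "w \<noteq> 0"
  shows "0 < w \<longleftrightarrow> s = (if 0 < s * w then 1 else -1)"
  using assms by (auto simp: zero_less_mult_iff)

lemma doubleton_eq_iff_sum_abs_diff: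
  fixes a b a' b' :: real
  shows "{a, b} = {a', b'} \<longleftrightarrow> a + b = a' + b' \<and> \<bar>a - b\<bar> = \<bar>a' - b'\<bar>"
  unfolding doubleton_eq_iff abs_if by auto

lemma AE_gauss_law_inner_neq_0:
  fixes c :: "real^'n"
  assumes "c \<noteq> 0"
  shows "AE y in gauss_law X beta sig. c \<bullet> y \<noteq> 0"
proof -
  have "{y. c \<bullet> y = 0} \<in> null_sets lebesgue"
    using negligible_hyperplane[of c 0] assms by (simp add: negligible_iff_null_sets)
  then have "{y. c \<bullet> y = 0} \<in> null_sets lborel"
    using null_sets_completion_iff[of "{y. c \<bullet> y = 0}" lborel] closed_hyperplane by simp
  then have "AE y in lborel. c \<bullet> y \<noteq> 0" by (rule AE_I') auto
  then show ?thesis unfolding gauss_law_def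
    by (subst AE_density) auto
qed

abbreviation coupled_betatilde :: "real^'d^'n \<Rightarrow> real^'d^'n \<Rightarrow> real^'d^'d \<Rightarrow> real^'n \<Rightarrow> real^'d"
  where "coupled_betatilde X Xk D \<equiv> wh_betatilde X (omega_of X Xk D)"

abbreviation coupled_xi :: "real^'d^'n \<Rightarrow> real^'d^'n \<Rightarrow> real^'d^'d \<Rightarrow> real^'n \<Rightarrow> real^'d"
  where "coupled_xi X Xk D \<equiv> wh_xi X (Delta_of D) (omega_of X Xk D)"

context
  fixes X Xk :: "real^'d^'n" and D :: "real^'d^'d"
  assumes full_rank: "rank X = CARD('d)" and knockoff: "is_knockoff X Xk D"
begin

lemma knockoff_D_pos: "0 < D $ j $ j"
  using knockoff by (simp add: is_knockoff_def diag_pos_def)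

lemma knockoff_D_nonzero: "D $ j $ j \<noteq> 0"
  using knockoff_D_pos[of j] by simp

lemma matrix_inv_knockoff_D: "matrix_inv D = diag_matrix (\<lambda>i. inverse (D $ i $ i))"
proof -
  have "D = diag_matrix (\<lambda>i. D $ i $ i)"
    using knockoff by (simp add: is_knockoff_def diag_pos_eq_diag_matrix)
  also have "matrix_inv \<dots> = diag_matrix (\<lambda>i. inverse (D $ i $ i))"
    by (simp add: matrix_inv_diag_matrix knockoff_D_nonzero)
  finally show ?thesis .
qed

lemma coupled_betatilde_component:
  "coupled_betatilde X Xk D y $ j = (column j X - column j Xk) \<bullet> y / D $ j $ j"
  by (simp add: wh_betatilde_def omega_of_def matrix_inv_knockoff_D diag_matrix_mult_vector
      vector_matrix_mult_component column_diff field_simps)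

lemma matrix_inv_Sigma_mult_betahat: "matrix_inv (Sigma_of X) *v betahat X y = transpose X *v y"
proof -
  define G where "G = transpose X ** X"
  have G: "invertible G" unfolding G_def using full_rank by (rule invertible_gram)
  have "matrix_inv (Sigma_of X) = G"
    unfolding Sigma_of_def G_def[symmetric]
    by (rule matrix_inv_unique) (simp_all add: matrix_inv_cancel G)
  then show ?thesis
    by (simp add: betahat_def Sigma_of_def G_def[symmetric] matrix_vector_mul_assoc
        matrix_inv_cancel G)
qed

lemma coupled_xi_component:
  "coupled_xi X Xk D y $ j = (column j X \<bullet> y + column j Xk \<bullet> y) / 2"
proof -
  have "Delta_of D = diag_matrix (\<lambda>i. 2 * inverse (D $ i $ i))"
    by (simp add: Delta_of_def matrix_inv_knockoff_D diag_matrix_def vec_eq_iff)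
  then have "matrix_inv (Delta_of D) = diag_matrix (\<lambda>i. D $ i $ i / 2)"
    by (simp add: matrix_inv_diag_matrix knockoff_D_nonzero field_simps)
  then show ?thesis
    using knockoff_D_nonzero[of j]
    by (simp add: wh_xi_def matrix_inv_Sigma_mult_betahat diag_matrix_mult_vector
        coupled_betatilde_component vector_matrix_mult_component inner_diff_left field_simps)
qed

lemma knockoff_column_neq: "column j X \<noteq> column j Xk"
proof
  assume "column j X = column j Xk"
  then have "(transpose Xk ** X) $ j $ j = (transpose X ** X) $ j $ j"
    by (simp add: transpose_mult_component)
  moreover have "transpose Xk ** X = transpose X ** X - D"
    using knockoff by (simp add: is_knockoff_def)
  ultimately show False using knockoff_D_pos[of j] by simp
qed

lemma sgn_coupled_betatilde:
  "sgn (coupled_betatilde X Xk D y $ j) = sgn ((column j X - column j Xk) \<bullet> y)"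
  using knockoff_D_pos[of j] by (simp add: coupled_betatilde_component)

lemma pairs_eq_iff_coupled_eq:
  "(\<forall>j. {column j X \<bullet> y, column j Xk \<bullet> y} = {column j X \<bullet> y', column j Xk \<bullet> y'})
   \<longleftrightarrow> coupled_xi X Xk D y = coupled_xi X Xk D y' \<and>
       vabs (coupled_betatilde X Xk D y) = vabs (coupled_betatilde X Xk D y')"
proof -
  have "coupled_xi X Xk D y = coupled_xi X Xk D y' \<longleftrightarrow>
      (\<forall>j. column j X \<bullet> y + column j Xk \<bullet> y = column j X \<bullet> y' + column j Xk \<bullet> y')"
    unfolding vec_eq_iff coupled_xi_component divide_cancel_right by simp
  moreover have "vabs (coupled_betatilde X Xk D y) = vabs (coupled_betatilde X Xk D y') \<longleftrightarrow>
      (\<forall>j. \<bar>column j X \<bullet> y - column j Xk \<bullet> y\<bar> = \<bar>column j X \<bullet> y' - column j Xk \<bullet> y'\<bar>)"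
    by (simp add: vec_eq_iff vabs_def coupled_betatilde_component inner_diff_left knockoff_D_nonzero)
  ultimately show ?thesis
    by (auto simp: doubleton_eq_iff_sum_abs_diff)
qed

lemma unordered_pair_prop_iff_factors:
  "unordered_pair_prop X Xk W \<longleftrightarrow>
   (\<exists>V. \<forall>y. Wstar X Xk W y = V (coupled_xi X Xk D y) (vabs (coupled_betatilde X Xk D y)))"
proof
  assume W: "unordered_pair_prop X Xk W"
  define V where "V a b = Wstar X Xk W (SOME y. coupled_xi X Xk D y = a \<and> vabs (coupled_betatilde X Xk D y) = b)"
    for a b
  have "Wstar X Xk W y = V (coupled_xi X Xk D y) (vabs (coupled_betatilde X Xk D y))" for y
  proof -
    define y0 where "y0 = (SOME y'. coupled_xi X Xk D y' = coupled_xi X Xk D y \<and>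
      vabs (coupled_betatilde X Xk D y') = vabs (coupled_betatilde X Xk D y))"
    have "coupled_xi X Xk D y0 = coupled_xi X Xk D y \<and>
        vabs (coupled_betatilde X Xk D y0) = vabs (coupled_betatilde X Xk D y)"
      unfolding y0_def by (rule someI[of _ y]) simp
    then have "Wstar X Xk W y = Wstar X Xk W y0"
      using W unfolding unordered_pair_prop_def pairs_eq_iff_coupled_eq by metis
    then show ?thesis by (simp add: V_def y0_def)
  qed
  then show "\<exists>V. \<forall>y. Wstar X Xk W y = V (coupled_xi X Xk D y) (vabs (coupled_betatilde X Xk D y))" by blast
next
  assume "\<exists>V. \<forall>y. Wstar X Xk W y = V (coupled_xi X Xk D y) (vabs (coupled_betatilde X Xk D y))"
  then obtain V where V: "\<And>y. Wstar X Xk W y = V (coupled_xi X Xk D y) (vabs (coupled_betatilde X Xk D y))"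
    by blast
  show "unordered_pair_prop X Xk W"
    unfolding unordered_pair_prop_def pairs_eq_iff_coupled_eq by (simp add: V)
qed

lemma knockoff_matches_whitening:
  assumes impl: "valid_impl ord psi"
  shows "\<exists>W. unordered_pair_prop X Xk W \<and>
    (\<forall>y. kf_rej alpha (W y) = whitening_rej alpha X (Delta_of D) (omega_of X Xk D) ord psi y)"
proof -
  let ?bt = "coupled_betatilde X Xk D" and ?xi = "coupled_xi X Xk D"
  define W where "W y = whitening_statistic (ord (?xi y) (vabs (?bt y))) (psi (?xi y) (vabs (?bt y))) (?bt y)"
    for y
  define V where "V a b = (\<chi> j. if b $ j = 0 then 0 else
      psi a b j * (real CARD('d) + 1 - real (inv_into {1..CARD('d)} (ord a b) j)))" for a b
  have "Wstar X Xk W y $ j = V (?xi y) (vabs (?bt y)) $ j" for y j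
  proof -
    let ?p = "psi (?xi y) (vabs (?bt y)) j"
      and ?r = "real CARD('d) + 1 - real (inv_into {1..CARD('d)} (ord (?xi y) (vabs (?bt y))) j)"
    have "?p \<in> {-1, 1}"
      using impl by (simp add: valid_impl_def)
    have "Wstar X Xk W y $ j = sgn (?bt y $ j) * ((if sgn (?bt y $ j) = ?p then 1 else -1) * ?r)"
      unfolding Wstar_def W_def whitening_statistic_def wh_ptilde_half_iff
      by (simp add: sgn_coupled_betatilde[symmetric])
    also have "\<dots> = (if ?bt y $ j = 0 then 0 else ?p * ?r)"
      by (rule sgn_mult_sign_indicator) fact
    finally show ?thesis by (simp add: V_def vabs_def)
  qed
  then have "Wstar X Xk W y = V (?xi y) (vabs (?bt y))" for y
    by (simp add: vec_eq_iff)
  then have "unordered_pair_prop X Xk W"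
    unfolding unordered_pair_prop_iff_factors by blast
  moreover have "kf_rej alpha (W y) = whitening_rej alpha X (Delta_of D) (omega_of X Xk D) ord psi y" for y
    using impl unfolding W_def whitening_rej_def Let_def valid_impl_def
    by (simp add: kf_rej_whitening_statistic)
  ultimately show ?thesis by blast
qed

lemma whitening_matches_knockoff:
  assumes W: "unordered_pair_prop X Xk W"
    and distinct: "AE y in gauss_law X beta sig. (\<forall>j. \<bar>W y $ j\<bar> > 0) \<and> inj (\<lambda>j. \<bar>W y $ j\<bar>)"
  shows "\<exists>ord psi. valid_impl ord psi \<and>
    (AE y in gauss_law X beta sig.
       kf_rej alpha (W y) = whitening_rej alpha X (Delta_of D) (omega_of X Xk D) ord psi y)"
proof -
  let ?bt = "coupled_betatilde X Xk D" and ?xi = "coupled_xi X Xk D"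
  obtain V where V: "\<And>y. Wstar X Xk W y = V (?xi y) (vabs (?bt y))"
    using W unfolding unordered_pair_prop_iff_factors by blast
  define enumerates where "enumerates a b f \<longleftrightarrow> bij_betw f {1..CARD('d)} UNIV \<and>
    (inj (\<lambda>j. \<bar>V a b $ j\<bar>) \<longrightarrow> strict_antimono_on {1..CARD('d)} (\<lambda>i. \<bar>V a b $ f i\<bar>))" for a b f
  define ord where "ord a b = (SOME f. enumerates a b f)" for a b
  define psi :: "real^'d \<Rightarrow> real^'d \<Rightarrow> 'd \<Rightarrow> real"
    where "psi a b j = (if 0 < V a b $ j then 1 else -1)" for a b j
  have ord: "enumerates a b (ord a b)" for a b
  proof -
    have "\<exists>f. enumerates a b f"
    proof (cases "inj (\<lambda>j. \<bar>V a b $ j\<bar>)")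
      case True
      then show ?thesis
        using exists_strict_antimono_enumeration by (simp add: enumerates_def o_def)
    next
      case False
      have "\<exists>f. bij_betw f {1..CARD('d)} (UNIV :: 'd set)"
        by (rule finite_same_card_bij) simp_all
      then show ?thesis using False by (simp add: enumerates_def)
    qed
    then show ?thesis unfolding ord_def by (rule someI_ex)
  qed
  then have "valid_impl ord psi"
    by (simp add: valid_impl_def enumerates_def psi_def)
  moreover have "AE y in gauss_law X beta sig. \<forall>j\<in>UNIV. (column j X - column j Xk) \<bullet> y \<noteq> 0"
    using knockoff_column_neq by (intro AE_finite_allI AE_gauss_law_inner_neq_0) auto
  then have "AE y in gauss_law X beta sig.
      kf_rej alpha (W y) = whitening_rej alpha X (Delta_of D) (omega_of X Xk D) ord psi y"
    using distinct
  proof eventually_elim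
    case (elim y)
    let ?a = "?xi y" and ?b = "vabs (?bt y)"
    have s: "sgn ((column j X - column j Xk) \<bullet> y) \<in> {-1, 1}" for j
      using elim(1) by (simp add: sgn_if)
    have Vj: "V ?a ?b $ j = sgn ((column j X - column j Xk) \<bullet> y) * W y $ j" for j
      using V[of y] by (simp add: vec_eq_iff Wstar_def)
    have abs_V: "\<bar>V ?a ?b $ j\<bar> = \<bar>W y $ j\<bar>" for j
      using s[of j] by (auto simp: Vj abs_mult)
    have "kf_rej alpha (W y) = wh_rej alpha (ord ?a ?b) (psi ?a ?b) (?bt y)"
    proof (rule kf_rej_eq_wh_rej)
      show "bij_betw (ord ?a ?b) {1..CARD('d)} UNIV"
        using ord by (simp add: enumerates_def)
      show "strict_antimono_on {1..CARD('d)} (\<lambda>i. \<bar>W y $ ord ?a ?b i\<bar>)"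
        using ord[of ?a ?b] elim(2) by (simp add: enumerates_def abs_V)
      show "W y $ j \<noteq> 0" for j
        using elim(2) by force
      show "0 < W y $ j \<longleftrightarrow> wh_ptilde (psi ?a ?b) (?bt y) j = 1/2" for j
        unfolding wh_ptilde_half_iff sgn_coupled_betatilde psi_def Vj
        using elim(2) by (intro pos_iff_sign_recovered s) auto
    qed
    then show ?case by (simp add: whitening_rej_def Let_def)
  qed
  ultimately show ?thesis by blast
qed

end

theorem theorem1:
  fixes X Xk :: "real^'d^'n" and D :: "real^'d^'d"
    and beta :: "real^'d" and sig alpha :: real
  assumes n_ge: "CARD('n) \<ge> 2 * CARD('d)"
    and full_rank: "rank X = CARD('d)"
    and knock: "is_knockoff X Xk D"
    and sigma_pos: "sig > 0"
    and alpha: "0 < alpha" "alpha < 1"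
  shows
    "(\<forall>ord psi. valid_impl ord psi \<longrightarrow>
        (\<exists>W. unordered_pair_prop X Xk W \<and>
             (\<forall>y. kf_rej alpha (W y) =
                  whitening_rej alpha X (Delta_of D) (omega_of X Xk D) ord psi y)))
     \<and>
     (\<forall>W. unordered_pair_prop X Xk W \<and>
          (AE y in gauss_law X beta sig. (\<forall>j. \<bar>W y $ j\<bar> > 0) \<and> inj (\<lambda>j. \<bar>W y $ j\<bar>))
        \<longrightarrow> (\<exists>ord psi. valid_impl ord psi \<and>
              (AE y in gauss_law X beta sig. kf_rej alpha (W y) =
                  whitening_rej alpha X (Delta_of D) (omega_of X Xk D) ord psi y)))"
  using knockoff_matches_whitening[OF full_rank knock] whitening_matches_knockoff[OF full_rank knock]
  by blast

end
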